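(* Consider the economy without knowledge synergies and assume the abundance condition (A). Then for every $\boldsymbol m\in[0,1]^2$ an equilibrium exists, every equilibrium maximizes total output over feasible allocations, and in every equilibrium $r^*=F(\boldsymbol m)$ and $w^*=\max\{\tilde w_s,\tilde w_b,\tilde w_t\}$. Moreover, with these prices the following allocations form an equilibrium: if $\boldsymbol m\in\tilde R_s$: $\alpha_s^*=1$, $\mu_s^*=\mu$; if $\boldsymbol m\in\tilde R_b$: $\alpha_b^*=1$, $\mu_b^*=n(\boldsymbol m)$, $\mu_s^*=\mu-\mu_b^*$; if $\boldsymbol m\in\tilde R_t$: $\alpha_t^*=1$, $\mu_t^*=1/n(\boldsymbol h)$, $\mu_s^*=\mu-\mu_t^*$.
   Context: Fix a cumulative distribution function $F$ on $[0,1]^2$ with a density $f$ that has full support on $[0,1]^2$, $c\in(0,1)$, human knowledge $\boldsymbol h\in(0,1)^2$ (unit mass of humans, one unit of time each), and a mass $\mu>0$ of machines with knowledge $\boldsymbol m\in[0,1]^2$ (one unit of time each). Write $\boldsymbol x\wedge\boldsymbol y=(\min\{x_1,y_1\},\min\{x_2,y_2\})$, $F(\boldsymbol m\oplus\boldsymbol h):=F(\boldsymbol m)+F(\boldsymbol h)-F(\boldsymbol m\wedge\boldsymbol h)$ (the probability that the human or the machine can solve a problem on its own), and for $F(\boldsymbol x)<1$, $n(\boldsymbol x)=\frac1{c(1-F(\boldsymbol x))}$. Without synergies, given wage $w\ge0$ and rental $r\ge0$, the firm types and profits are: single-layer non-automated $F(\boldsymbol h)-w$; single-layer automated $F(\boldsymbol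 m)-r$; bottom-automated $b$ (one human solver, $n(\boldsymbol m)$ machine workers; available when $F(\boldsymbol m)<1$) $\Pi_b=n(\boldsymbol m)[F(\boldsymbol m\oplus\boldsymbol h)-r]-w$; top-automated $t$ (one machine solver, $n(\boldsymbol h)$ human workers) $\Pi_t=n(\boldsymbol h)[F(\boldsymbol m\oplus\boldsymbol h)-w]-r$. A feasible allocation is $(\alpha_s,\alpha_b,\alpha_t,\mu_s,\mu_b,\mu_t)\ge0$ with $\mu_b=\alpha_bn(\boldsymbol m)$, $\mu_t=\alpha_t/n(\boldsymbol h)$, $\alpha_s+\alpha_b+\alpha_t=1$, $\mu_s+\mu_b+\mu_t=\mu$; total output $Y=\alpha_bn(\boldsymbol m)F(\boldsymbol m\oplus\boldsymbol h)+\alpha_tF(\boldsymbol m\oplus\boldsymbol h)+\alpha_sF(\boldsymbol h)+\mu_sF(\boldsymbol m)$. An equilibrium is a feasible allocation with prices $(w,r)\ge0$ such that all firm types have nonpositive profit and types used with positive mass earn zero profit. Define $\tilde w_s=F(\boldsymbol h)$, $\tilde w_b=n(\boldsymbol m)(F(\boldsymbol m\oplus\boldsymbol h)-F(\boldsymbol m))$ (with $\tilde w_b:=0$ if $F(\boldsymbol m)=1$), $\tilde w_t=F(\boldsymbol m\oplus\boldsymbol h)-F(\boldsymbol m)/n(\boldsymbol h)$; $\tilde R_s=\{\boldsymbol m:\tilde w_s\ge\max\{\tilde w_b,\tilde w_t\}\}$, $\tilde R_b=\{\boldsymbol m:\tilde w_b>\max\{\tilde w_s,\tilde w_t\}\}$,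 $\tilde R_t=[0,1]^2\setminus(\tilde R_s\cup\tilde R_b)$. Abundance condition (A): $\mu>\max\Big\{\frac1{c(1-F(1,h_2))},\frac1{c(1-F(h_1,1))}\Big\}$. *)

theory Defs
  imports "HOL-Analysis.Analysis"
begin

type_synonym pt = "real \<times> real"

definition unit_sq :: "pt set" where "unit_sq = cbox (0,0) (1,1)"
definition open_unit_sq :: "pt set" where "open_unit_sq = box (0,0) (1,1)"

definition cdf_with_full_support_density :: "(pt \<Rightarrow> real) \<Rightarrow> (pt \<Rightarrow> real) \<Rightarrow> bool" where
  "cdf_with_full_support_density F f \<longleftrightarrow>
     (\<forall>x\<in>unit_sq. 0 \<le> f x) \<and>
     (\<forall>x\<in>unit_sq. (f has_integral F x) (cbox (0,0) x)) \<and>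
     F (1,1) = 1 \<and>
     (\<forall>x\<in>unit_sq. \<forall>e>0. integral (cball x e \<inter> unit_sq) f > 0)"

definition meet :: "pt \<Rightarrow> pt \<Rightarrow> pt" where
  "meet x y = (min (fst x) (fst y), min (snd x) (snd y))"

definition Fplus :: "(pt \<Rightarrow> real) \<Rightarrow> pt \<Rightarrow> pt \<Rightarrow> real" where
  "Fplus F m h = F m + F h - F (meet m h)"

text \<open>n(x) = 1/(c(1-F x)), used only where F x < 1.\<close>
definition nn :: "(pt \<Rightarrow> real) \<Rightarrow> real \<Rightarrow> pt \<Rightarrow> real" where
  "nn F c x = 1 / (c * (1 - F x))"

definition profit_sh :: "(pt \<Rightarrow> real) \<Rightarrow> pt \<Rightarrow> real \<Rightarrow> real" where
  "profit_sh F h w = F h - w"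
definition profit_sm :: "(pt \<Rightarrow> real) \<Rightarrow> pt \<Rightarrow> real \<Rightarrow> real" where
  "profit_sm F m r = F m - r"
definition profit_b :: "(pt \<Rightarrow> real) \<Rightarrow> real \<Rightarrow> pt \<Rightarrow> pt \<Rightarrow> real \<Rightarrow> real \<Rightarrow> real" where
  "profit_b F c h m w r = nn F c m * (Fplus F m h - r) - w"
definition profit_t :: "(pt \<Rightarrow> real) \<Rightarrow> real \<Rightarrow> pt \<Rightarrow> pt \<Rightarrow> real \<Rightarrow> real \<Rightarrow> real" where
  "profit_t F c h m w r = nn F c h * (Fplus F m h - w) - r"

record alloc =
  a_s :: real
  a_b :: real
  a_t :: real
  m_s :: real
  m_b :: real
  m_t :: real

definition feasible :: "(pt \<Rightarrow> real) \<Rightarrow> real \<Rightarrow> pt \<Rightarrow> real \<Rightarrow> pt \<Rightarrow> alloc \<Rightarrow> bool" where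
  "feasible F c h \<mu> m A \<longleftrightarrow>
     a_s A \<ge> 0 \<and> a_b A \<ge> 0 \<and> a_t A \<ge> 0 \<and> m_s A \<ge> 0 \<and> m_b A \<ge> 0 \<and> m_t A \<ge> 0 \<and>
     (F m = 1 \<longrightarrow> a_b A = 0) \<and>
     m_b A = a_b A * nn F c m \<and>
     m_t A = a_t A / nn F c h \<and>
     a_s A + a_b A + a_t A = 1 \<and>
     m_s A + m_b A + m_t A = \<mu>"

definition total_output :: "(pt \<Rightarrow> real) \<Rightarrow> real \<Rightarrow> pt \<Rightarrow> pt \<Rightarrow> alloc \<Rightarrow> real" where
  "total_output F c h m A =
     a_b A * nn F c m * Fplus F m h + a_t A * Fplus F m h + a_s A * F h + m_s A * F m"

definition equilibrium ::
  "(pt \<Rightarrow> real) \<Rightarrow> real \<Rightarrow> pt \<Rightarrow> real \<Rightarrow> pt \<Rightarrow> alloc \<Rightarrow> real \<Rightarrow> real \<Rightarrow> bool" where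
  "equilibrium F c h \<mu> m A w r \<longleftrightarrow>
     feasible F c h \<mu> m A \<and> w \<ge> 0 \<and> r \<ge> 0 \<and>
     profit_sh F h w \<le> 0 \<and> profit_sm F m r \<le> 0 \<and>
     (F m < 1 \<longrightarrow> profit_b F c h m w r \<le> 0) \<and> profit_t F c h m w r \<le> 0 \<and>
     (a_s A > 0 \<longrightarrow> profit_sh F h w = 0) \<and>
     (m_s A > 0 \<longrightarrow> profit_sm F m r = 0) \<and>
     (a_b A > 0 \<longrightarrow> profit_b F c h m w r = 0) \<and>
     (a_t A > 0 \<longrightarrow> profit_t F c h m w r = 0)"

definition wt_s :: "(pt \<Rightarrow> real) \<Rightarrow> pt \<Rightarrow> real" where
  "wt_s F h = F h"
definition wt_b :: "(pt \<Rightarrow> real) \<Rightarrow> real \<Rightarrow> pt \<Rightarrow> pt \<Rightarrow> real" where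
  "wt_b F c h m = (if F m = 1 then 0 else nn F c m * (Fplus F m h - F m))"
definition wt_t :: "(pt \<Rightarrow> real) \<Rightarrow> real \<Rightarrow> pt \<Rightarrow> pt \<Rightarrow> real" where
  "wt_t F c h m = Fplus F m h - F m / nn F c h"

definition R_s :: "(pt \<Rightarrow> real) \<Rightarrow> real \<Rightarrow> pt \<Rightarrow> pt set" where
  "R_s F c h = {m \<in> unit_sq. wt_s F h \<ge> max (wt_b F c h m) (wt_t F c h m)}"
definition R_b :: "(pt \<Rightarrow> real) \<Rightarrow> real \<Rightarrow> pt \<Rightarrow> pt set" where
  "R_b F c h = {m \<in> unit_sq. wt_b F c h m > max (wt_s F h) (wt_t F c h m)}"
definition R_t :: "(pt \<Rightarrow> real) \<Rightarrow> real \<Rightarrow> pt \<Rightarrow> pt set" where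
  "R_t F c h = unit_sq - (R_s F c h \<union> R_b F c h)"

definition star_alloc :: "(pt \<Rightarrow> real) \<Rightarrow> real \<Rightarrow> pt \<Rightarrow> real \<Rightarrow> pt \<Rightarrow> alloc" where
  "star_alloc F c h \<mu> m =
    (if m \<in> R_s F c h then
       \<lparr>a_s = 1, a_b = 0, a_t = 0, m_s = \<mu>, m_b = 0, m_t = 0\<rparr>
     else if m \<in> R_b F c h then
       \<lparr>a_s = 0, a_b = 1, a_t = 0, m_s = \<mu> - nn F c m, m_b = nn F c m, m_t = 0\<rparr>
     else
       \<lparr>a_s = 0, a_b = 0, a_t = 1, m_s = \<mu> - 1 / nn F c h, m_b = 0, m_t = 1 / nn F c h\<rparr>)"

end

theory Submission imports Defs begin

text \<open>Abundance forces some machines to work alone in every equilibrium, so the rental equals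
  F m. At that rental each human's zero-profit wage in firm type i is the candidate wage
  wt_i, hence the equilibrium wage is their maximum. Total output equals the value
  \<mu> F m of all machines plus the average of the wt_i over the human assignment, which is
  at most the maximum and attains it exactly in equilibrium; the candidate allocation puts
  every human in a type with maximal wt_i.\<close>

lemma mem_unit_sq: "x \<in> unit_sq \<longleftrightarrow> 0 \<le> fst x \<and> fst x \<le> 1 \<and> 0 \<le> snd x \<and> snd x \<le> 1"
  by (cases x) (auto simp: unit_sq_def cbox_Pair_eq)

lemma mem_open_unit_sq: "x \<in> open_unit_sq \<longleftrightarrow> 0 < fst x \<and> fst x < 1 \<and> 0 < snd x \<and> snd x < 1"
  by (cases x) (auto simp: open_unit_sq_def mem_box Basis_prod_def)

lemma mem_cbox_origin: "(y::pt) \<in> cbox (0,0) x \<longleftrightarrow> 0 \<le> fst y \<and> fst y \<le> fst x \<and> 0 \<le> snd y \<and> snd y \<le> snd x"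
  by (cases x, cases y) (auto simp: cbox_Pair_eq)

lemma cbox_origin_subset_unit_sq: "x \<in> unit_sq \<Longrightarrow> cbox (0,0) x \<subseteq> unit_sq"
  by (auto simp: mem_unit_sq mem_cbox_origin)

lemma cdf_has_integral:
  "cdf_with_full_support_density F f \<Longrightarrow> x \<in> unit_sq \<Longrightarrow> (f has_integral F x) (cbox (0,0) x)"
  unfolding cdf_with_full_support_density_def by blast

lemma cdf_integral_le:
  assumes cdf: "cdf_with_full_support_density F f" and x: "x \<in> unit_sq"
    and S: "S \<subseteq> cbox (0,0) x" and int: "f integrable_on S"
  shows "integral S f \<le> F x"
proof -
  have hi: "(f has_integral F x) (cbox (0,0) x)" by (rule cdf_has_integral[OF cdf x])
  have "integral S f \<le> integral (cbox (0,0) x) f"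
    using int hi cdf cbox_origin_subset_unit_sq[OF x]
    by (intro integral_subset_le[OF S]) (auto simp: cdf_with_full_support_density_def)
  then show ?thesis using hi by (simp add: integral_unique)
qed

lemma cdf_nonneg:
  assumes "cdf_with_full_support_density F f" and "x \<in> unit_sq"
  shows "0 \<le> F x"
  using assms cbox_origin_subset_unit_sq[OF assms(2)]
  by (intro has_integral_nonneg[OF cdf_has_integral[OF assms]])
    (auto simp: cdf_with_full_support_density_def)

lemma cdf_mono:
  assumes cdf: "cdf_with_full_support_density F f" and x: "x \<in> unit_sq" and y: "y \<in> unit_sq"
    and "fst x \<le> fst y" "snd x \<le> snd y"
  shows "F x \<le> F y"
proof -
  have hi: "(f has_integral F x) (cbox (0,0) x)" by (rule cdf_has_integral[OF cdf x])
  have "integral (cbox (0,0) x) f \<le> F y"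
    using assms hi by (intro cdf_integral_le[OF cdf y]) (auto simp: mem_cbox_origin)
  then show ?thesis using hi by (simp add: integral_unique)
qed

lemma cdf_le_1:
  assumes cdf: "cdf_with_full_support_density F f" and x: "x \<in> unit_sq"
  shows "F x \<le> 1"
proof -
  have "F x \<le> F (1,1)" using x by (intro cdf_mono[OF cdf]) (auto simp: mem_unit_sq)
  then show ?thesis using cdf by (simp add: cdf_with_full_support_density_def)
qed

lemma cdf_local_mass:
  assumes "cdf_with_full_support_density F f" and "x \<in> unit_sq" and "0 < e"
  shows "0 < integral (cball x e \<inter> unit_sq) f" and "f integrable_on (cball x e \<inter> unit_sq)"
proof -
  show pos: "0 < integral (cball x e \<inter> unit_sq) f"
    using assms by (auto simp: cdf_with_full_support_density_def)
  then show "f integrable_on (cball x e \<inter> unit_sq)" using not_integrable_integral by force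
qed

lemma cdf_pos:
  assumes cdf: "cdf_with_full_support_density F f" and x: "x \<in> open_unit_sq"
  shows "0 < F x"
proof -
  define e where "e = min (fst x) (snd x)"
  define S where "S = cball (0,0) e \<inter> unit_sq"
  have e: "0 < e" using x by (auto simp: e_def mem_open_unit_sq)
  have origin: "(0,0) \<in> unit_sq" by (simp add: mem_unit_sq)
  have "S \<subseteq> cbox (0,0) x"
  proof
    fix y assume "y \<in> S"
    then have "dist (0,0) y \<le> e" "0 \<le> fst y" "0 \<le> snd y" by (auto simp: S_def mem_unit_sq)
    moreover have "dist 0 (fst y) \<le> dist (0,0) y" "dist 0 (snd y) \<le> dist (0,0) y"
      using dist_fst_le[of "(0,0)" y] dist_snd_le[of "(0,0)" y] by simp_all
    ultimately show "y \<in> cbox (0,0) x" by (auto simp: mem_cbox_origin e_def dist_real_def)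
  qed
  then have "integral S f \<le> F x"
    using x cdf_local_mass(2)[OF cdf origin e]
    by (intro cdf_integral_le[OF cdf]) (auto simp: S_def mem_unit_sq mem_open_unit_sq)
  then show ?thesis using cdf_local_mass(1)[OF cdf origin e] by (simp add: S_def)
qed

text \<open>A neighbourhood of the corner (1,1) carries positive mass outside the rectangle below x.\<close>

lemma cdf_lt_1:
  assumes cdf: "cdf_with_full_support_density F f" and x: "x \<in> unit_sq"
    and below_top: "fst x < 1 \<or> snd x < 1"
  shows "F x < 1"
proof -
  define e where "e = (1 - min (fst x) (snd x)) / 2"
  define S where "S = cball (1,1) e \<inter> unit_sq"
  define C where "C = cbox (0,0) x"
  have e: "0 < e" using below_top by (auto simp: e_def)
  have corner: "(1,1) \<in> unit_sq" by (simp add: mem_unit_sq)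
  have disjoint: "S \<inter> C = {}"
  proof (rule ccontr)
    assume "S \<inter> C \<noteq> {}"
    then obtain y where "dist (1,1) y \<le> e" "fst y \<le> fst x" "snd y \<le> snd x"
      by (auto simp: S_def C_def mem_cbox_origin)
    moreover have "dist 1 (fst y) \<le> dist (1,1) y" "dist 1 (snd y) \<le> dist (1,1) y"
      using dist_fst_le[of "(1,1)" y] dist_snd_le[of "(1,1)" y] by simp_all
    ultimately show False using below_top by (auto simp: e_def dist_real_def min_def split: if_splits)
  qed
  have SC: "(f has_integral (integral S f + F x)) (S \<union> C)"
    using cdf_local_mass(2)[OF cdf corner e] cdf_has_integral[OF cdf x] disjoint
    by (intro has_integral_Un) (auto simp: S_def C_def)
  have sq: "(f has_integral 1) unit_sq"
    using cdf_has_integral[OF cdf corner] cdf by (simp add: unit_sq_def cdf_with_full_support_density_def)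
  have "integral (S \<union> C) f \<le> integral unit_sq f"
    using SC sq cdf cbox_origin_subset_unit_sq[OF x]
    by (intro integral_subset_le) (auto simp: S_def C_def cdf_with_full_support_density_def)
  then have "integral S f + F x \<le> 1" using SC sq by (simp add: integral_unique)
  then show ?thesis using cdf_local_mass(1)[OF cdf corner e] by (simp add: S_def)
qed

lemma nn_pos: "0 < c \<Longrightarrow> F x < 1 \<Longrightarrow> 0 < nn F c x"
  by (simp add: nn_def)

lemma inverse_nn: "1 / nn F c x = c * (1 - F x)"
  by (simp add: nn_def)

lemma nn_ge_1:
  assumes "0 < c" "c \<le> 1" "0 \<le> F x" "F x < 1"
  shows "1 \<le> nn F c x"
proof -
  have "c * (1 - F x) \<le> 1" using assms by (intro mult_le_one) auto
  then show ?thesis using assms by (simp add: nn_def field_simps)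
qed

lemma nn_mono:
  assumes "0 < c" "F x \<le> F y" "F y < 1"
  shows "nn F c x \<le> nn F c y"
  unfolding nn_def using assms by (intro divide_left_mono mult_pos_pos mult_left_mono) auto

lemma profit_b_at_machine_price:
  "F m \<noteq> 1 \<Longrightarrow> profit_b F c h m w (F m) = wt_b F c h m - w"
  by (simp add: profit_b_def wt_b_def algebra_simps)

lemma profit_t_at_machine_price:
  "nn F c h \<noteq> 0 \<Longrightarrow> profit_t F c h m w (F m) = nn F c h * (wt_t F c h m - w)"
  by (simp add: profit_t_def wt_t_def field_simps)

text \<open>Every machine not used in a hierarchy produces F m on its own, so output splits into
  the value of all machines at price F m plus each human's contribution at the wage
  that leaves firms of her type with zero profit.\<close>

lemma total_output_eq:
  assumes fe: "feasible F c h \<mu> m A" and nh: "nn F c h \<noteq> 0"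
  shows "total_output F c h m A =
           \<mu> * F m + a_s A * wt_s F h + a_b A * wt_b F c h m + a_t A * wt_t F c h m"
proof -
  have ms: "m_s A = \<mu> - a_b A * nn F c m - a_t A / nn F c h" using fe by (auto simp: feasible_def)
  have "F m = 1 \<Longrightarrow> a_b A = 0" using fe by (auto simp: feasible_def)
  then show ?thesis using nh
    by (cases "F m = 1") (auto simp: total_output_def ms wt_s_def wt_b_def wt_t_def field_simps)
qed

definition market_wage :: "(pt \<Rightarrow> real) \<Rightarrow> real \<Rightarrow> pt \<Rightarrow> pt \<Rightarrow> real" where
  "market_wage F c h m = max (wt_s F h) (max (wt_b F c h m) (wt_t F c h m))"

lemma wt_le_market_wage:
  "wt_s F h \<le> market_wage F c h m" "wt_b F c h m \<le> market_wage F c h m"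
  "wt_t F c h m \<le> market_wage F c h m"
  by (auto simp: market_wage_def)

lemma feasible_total_output_le:
  assumes fe: "feasible F c h \<mu> m A" and nh: "nn F c h \<noteq> 0"
  shows "total_output F c h m A \<le> \<mu> * F m + market_wage F c h m"
proof -
  have a: "0 \<le> a_s A" "0 \<le> a_b A" "0 \<le> a_t A" "a_s A + a_b A + a_t A = 1"
    using fe by (auto simp: feasible_def)
  have "a_s A * wt_s F h + a_b A * wt_b F c h m + a_t A * wt_t F c h m
        \<le> a_s A * market_wage F c h m + a_b A * market_wage F c h m + a_t A * market_wage F c h m"
    using a wt_le_market_wage by (intro add_mono mult_left_mono) auto
  also have "\<dots> = market_wage F c h m" using a(4) by (metis distrib_right mult_1)
  finally show ?thesis using total_output_eq[OF fe nh] by linarith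
qed

text \<open>The abundance condition enters only through its last assumption: either m already
  knows everything h knows, or there are enough machines to staff a whole economy of
  bottom-automated firms.\<close>

locale abundant_economy =
  fixes F :: "pt \<Rightarrow> real" and c \<mu> :: real and h m :: pt
  assumes c: "0 < c" "c < 1"
    and F_h: "0 < F h" "F h < 1"
    and F_m: "0 \<le> F m" "F m \<le> 1"
    and mu_gt_1: "1 < \<mu>"
    and abundance: "Fplus F m h = F m \<or> F m < 1 \<and> nn F c m < \<mu>"
begin

lemma nn_h_pos: "0 < nn F c h"
  using nn_pos c F_h by blast

lemma inverse_nn_h_lt_1: "1 / nn F c h < 1"
proof -
  have "c * (1 - F h) < 1 * 1" using c F_h by (intro mult_strict_mono') auto
  then show ?thesis by (simp add: inverse_nn)
qed

lemma profit_t_at_machine_price_le_0_iff: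
  "profit_t F c h m w (F m) \<le> 0 \<longleftrightarrow> wt_t F c h m \<le> w"
  using nn_h_pos by (simp add: profit_t_at_machine_price mult_le_0_iff)

lemma profit_t_at_machine_price_eq_0_iff:
  "profit_t F c h m w (F m) = 0 \<longleftrightarrow> wt_t F c h m = w"
  using nn_h_pos by (simp add: profit_t_at_machine_price)

lemma market_wage_nonneg: "0 \<le> market_wage F c h m"
  using F_h wt_le_market_wage(1)[of F h c m] by (simp add: wt_s_def)

text \<open>Otherwise hierarchies would absorb all \<mu> machines, but they use at most
  max (n m) (1 / n h) < \<mu> of them per human; and if m dominates h, a bottom-automated
  firm cannot break even.\<close>

lemma equilibrium_machines_alone:
  assumes eq: "equilibrium F c h \<mu> m A w r"
  shows "0 < m_s A"
proof (rule ccontr)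
  assume "\<not> 0 < m_s A"
  then have mu: "\<mu> = a_b A * nn F c m + a_t A / nn F c h"
    and a: "0 \<le> a_b A" "0 \<le> a_t A" "a_b A + a_t A \<le> 1"
    using eq by (auto simp: equilibrium_def feasible_def)
  have t: "a_t A / nn F c h \<le> a_t A"
    using a(2) inverse_nn_h_lt_1 mult_left_mono[of "1 / nn F c h" 1 "a_t A"] by simp
  show False
  proof (cases "a_b A = 0")
    case True
    then show False using mu a t mu_gt_1 by simp
  next
    case False
    then have ab: "0 < a_b A" using a by simp
    then have Fm: "F m < 1" using eq F_m by (auto simp: equilibrium_def feasible_def)
    have nm: "1 \<le> nn F c m" using nn_ge_1 c F_m Fm by simp
    consider "Fplus F m h = F m" | "nn F c m < \<mu>" using abundance by blast
    then show False
    proof cases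
      case 1
      have "nn F c m * (F m - r) = w" "F h \<le> w" "F m \<le> r"
        using eq ab 1 by (auto simp: equilibrium_def profit_b_def profit_sh_def profit_sm_def)
      moreover have "nn F c m * (F m - r) \<le> 0"
        using nm \<open>F m \<le> r\<close> by (simp add: mult_nonneg_nonpos)
      ultimately show False using F_h by linarith
    next
      case 2
      have "a_t A / nn F c h \<le> a_t A * nn F c m"
        using t a(2) nm mult_left_mono[of 1 "nn F c m" "a_t A"] by linarith
      then have "\<mu> \<le> (a_b A + a_t A) * nn F c m" using mu by (simp add: algebra_simps)
      also have "\<dots> \<le> nn F c m" using a nm mult_right_mono[of "a_b A + a_t A" 1 "nn F c m"] by simp
      finally show False using 2 by simp
    qed
  qed
qed

lemma equilibrium_rental: "equilibrium F c h \<mu> m A w r \<Longrightarrow> r = F m"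
  using equilibrium_machines_alone by (auto simp: equilibrium_def profit_sm_def)

lemma equilibrium_wage_ge:
  assumes eq: "equilibrium F c h \<mu> m A w r"
  shows "wt_s F h \<le> w" "wt_b F c h m \<le> w" "wt_t F c h m \<le> w"
proof -
  have r: "r = F m" by (rule equilibrium_rental[OF eq])
  show s: "wt_s F h \<le> w" using eq by (simp add: equilibrium_def profit_sh_def wt_s_def)
  show "wt_t F c h m \<le> w"
    using eq r profit_t_at_machine_price_le_0_iff by (simp add: equilibrium_def)
  show "wt_b F c h m \<le> w"
  proof (cases "F m = 1")
    case True
    then show ?thesis using s F_h by (simp add: wt_b_def wt_s_def)
  next
    case False
    then show ?thesis using eq r F_m by (simp add: equilibrium_def profit_b_at_machine_price)
  qed
qed

lemma equilibrium_wage_active: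
  assumes eq: "equilibrium F c h \<mu> m A w r"
  shows "0 < a_s A \<Longrightarrow> w = wt_s F h" "0 < a_b A \<Longrightarrow> w = wt_b F c h m"
    "0 < a_t A \<Longrightarrow> w = wt_t F c h m"
proof -
  have r: "r = F m" by (rule equilibrium_rental[OF eq])
  show "0 < a_s A \<Longrightarrow> w = wt_s F h" using eq by (simp add: equilibrium_def profit_sh_def wt_s_def)
  show "0 < a_t A \<Longrightarrow> w = wt_t F c h m"
    using eq r profit_t_at_machine_price_eq_0_iff by (simp add: equilibrium_def)
  assume ab: "0 < a_b A"
  then have "F m \<noteq> 1" using eq by (auto simp: equilibrium_def feasible_def)
  then show "w = wt_b F c h m" using eq r ab by (simp add: equilibrium_def profit_b_at_machine_price)
qed

lemma equilibrium_wage: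
  assumes eq: "equilibrium F c h \<mu> m A w r"
  shows "w = market_wage F c h m"
proof -
  have "0 < a_s A \<or> 0 < a_b A \<or> 0 < a_t A" using eq by (auto simp: equilibrium_def feasible_def)
  then have "w \<le> market_wage F c h m"
    using equilibrium_wage_active[OF eq] wt_le_market_wage by metis
  moreover have "market_wage F c h m \<le> w"
    using equilibrium_wage_ge[OF eq] by (simp add: market_wage_def)
  ultimately show ?thesis by simp
qed

lemma equilibrium_total_output:
  assumes eq: "equilibrium F c h \<mu> m A w r"
  shows "total_output F c h m A = \<mu> * F m + market_wage F c h m"
proof -
  have fe: "feasible F c h \<mu> m A" using eq by (simp add: equilibrium_def)
  have a: "0 \<le> a_s A" "0 \<le> a_b A" "0 \<le> a_t A" "a_s A + a_b A + a_t A = 1"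
    using fe by (auto simp: feasible_def)
  have "a_s A * wt_s F h = a_s A * w" "a_b A * wt_b F c h m = a_b A * w"
    "a_t A * wt_t F c h m = a_t A * w"
    using a equilibrium_wage_active[OF eq] by (auto simp: less_eq_real_def)
  moreover have "a_s A * w + a_b A * w + a_t A * w = w" using a(4) by (metis distrib_right mult_1)
  moreover have "total_output F c h m A =
      \<mu> * F m + a_s A * wt_s F h + a_b A * wt_b F c h m + a_t A * wt_t F c h m"
    using total_output_eq[OF fe] nn_h_pos by simp
  ultimately show ?thesis using equilibrium_wage[OF eq] by linarith
qed

lemma equilibrium_output_maximal:
  "equilibrium F c h \<mu> m A w r \<Longrightarrow> feasible F c h \<mu> m A' \<Longrightarrow>
     total_output F c h m A' \<le> total_output F c h m A"
  using equilibrium_total_output feasible_total_output_le nn_h_pos by simp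

lemma star_alloc_equilibrium:
  assumes m: "m \<in> unit_sq"
  shows "equilibrium F c h \<mu> m (star_alloc F c h \<mu> m) (market_wage F c h m) (F m)"
proof -
  define W where "W = market_wage F c h m"
  have W: "wt_s F h \<le> W" "wt_b F c h m \<le> W" "wt_t F c h m \<le> W" "0 \<le> W"
    using wt_le_market_wage market_wage_nonneg by (auto simp: W_def)
  have no_profit: "0 \<le> W" "0 \<le> F m" "profit_sh F h W \<le> 0" "profit_sm F m (F m) = 0"
    "F m < 1 \<longrightarrow> profit_b F c h m W (F m) \<le> 0" "profit_t F c h m W (F m) \<le> 0"
    using W F_m profit_t_at_machine_price_le_0_iff
    by (auto simp: profit_sh_def profit_sm_def wt_s_def profit_b_at_machine_price)
  have "equilibrium F c h \<mu> m (star_alloc F c h \<mu> m) W (F m)"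
  proof (cases "m \<in> R_s F c h")
    case True
    then have "W = wt_s F h" using m by (auto simp: R_s_def W_def market_wage_def)
    then show ?thesis using True no_profit mu_gt_1
      by (auto simp: equilibrium_def feasible_def star_alloc_def profit_sh_def wt_s_def)
  next
    case not_s: False
    show ?thesis
    proof (cases "m \<in> R_b F c h")
      case True
      then have b: "wt_b F c h m > max (wt_s F h) (wt_t F c h m)" using m by (simp add: R_b_def)
      then have WW: "W = wt_b F c h m" by (auto simp: W_def market_wage_def)
      have Fm: "F m < 1" using b F_h F_m by (cases "F m = 1") (auto simp: wt_b_def wt_s_def)
      have "Fplus F m h \<noteq> F m" using b F_h by (auto simp: wt_b_def wt_s_def split: if_splits)
      then have "nn F c m < \<mu>" using abundance by blast
      moreover have "0 \<le> nn F c m" using nn_pos[of c F m] c Fm by simp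
      moreover have "profit_b F c h m W (F m) = 0" using Fm WW by (simp add: profit_b_at_machine_price)
      ultimately show ?thesis using True not_s no_profit Fm
        by (auto simp: equilibrium_def feasible_def star_alloc_def)
    next
      case not_b: False
      then have "W = wt_t F c h m"
        using not_s m by (auto simp: R_s_def R_b_def W_def market_wage_def)
      then have "profit_t F c h m W (F m) = 0" using profit_t_at_machine_price_eq_0_iff by simp
      moreover have "0 \<le> 1 / nn F c h" "1 / nn F c h \<le> \<mu>"
        using nn_h_pos inverse_nn_h_lt_1 mu_gt_1 by (simp, linarith)
      ultimately show ?thesis using not_s not_b no_profit
        by (auto simp: equilibrium_def feasible_def star_alloc_def)
    qed
  qed
  then show ?thesis by (simp add: W_def)
qed

end

lemma Fplus_dominating: "fst h \<le> fst m \<Longrightarrow> snd h \<le> snd m \<Longrightarrow> Fplus F m h = F m"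
  by (cases h) (simp add: Fplus_def meet_def min_absorb2)

lemma abundant_economy_if_abundance_condition:
  assumes cdf: "cdf_with_full_support_density F f"
    and c: "0 < c" "c < 1"
    and h: "h \<in> open_unit_sq"
    and abundance: "\<mu> > max (1 / (c * (1 - F (1, snd h)))) (1 / (c * (1 - F (fst h, 1))))"
    and m: "m \<in> unit_sq"
  shows "abundant_economy F c \<mu> h m"
proof -
  have edges: "(1, snd h) \<in> unit_sq" "(fst h, 1) \<in> unit_sq" "h \<in> unit_sq"
    using h by (auto simp: mem_unit_sq mem_open_unit_sq)
  have F_edges: "F (1, snd h) < 1" "F (fst h, 1) < 1"
    using h by (auto intro!: cdf_lt_1[OF cdf] simp: edges mem_open_unit_sq)
  have mu: "nn F c (1, snd h) < \<mu>" "nn F c (fst h, 1) < \<mu>"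
    using abundance by (simp_all add: nn_def)
  have F_h_edge: "F h \<le> F (1, snd h)" using h by (intro cdf_mono[OF cdf edges(3,1)]) (auto simp: mem_open_unit_sq)
  have below_edge: "F m < 1 \<and> nn F c m < \<mu>" if e: "e \<in> unit_sq" "F e < 1" "nn F c e < \<mu>"
    and le: "fst m \<le> fst e" "snd m \<le> snd e" for e
  proof -
    have "F m \<le> F e" by (rule cdf_mono[OF cdf m e(1) le])
    then show ?thesis using nn_mono[OF c(1)] e by (meson le_less_trans order.strict_trans2)
  qed
  have "Fplus F m h = F m \<or> F m < 1 \<and> nn F c m < \<mu>"
  proof (cases "fst h \<le> fst m \<and> snd h \<le> snd m")
    case True
    then show ?thesis using Fplus_dominating by blast
  next
    case False
    then show ?thesis
      using below_edge[OF edges(1) F_edges(1) mu(1)] below_edge[OF edges(2) F_edges(2) mu(2)] m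
      by (auto simp: mem_unit_sq)
  qed
  moreover have "1 \<le> nn F c (1, snd h)"
    using c F_edges cdf_nonneg[OF cdf edges(1)] by (intro nn_ge_1) auto
  ultimately show ?thesis
    using c cdf_pos[OF cdf h] F_h_edge F_edges mu cdf_nonneg[OF cdf m] cdf_le_1[OF cdf m]
    by unfold_locales auto
qed

theorem mainTheorem7:
  fixes F f :: "real \<times> real \<Rightarrow> real" and c \<mu> :: real and h m :: "real \<times> real"
  assumes cdf: "cdf_with_full_support_density F f"
    and c: "0 < c" "c < 1"
    and h: "h \<in> open_unit_sq"
    and mu: "\<mu> > 0"
    and abundance: "\<mu> > max (1 / (c * (1 - F (1, snd h)))) (1 / (c * (1 - F (fst h, 1))))"
    and m: "m \<in> unit_sq"
  shows "(\<exists>A w r. equilibrium F c h \<mu> m A w r) \<and>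
         (\<forall>A w r. equilibrium F c h \<mu> m A w r \<longrightarrow>
              (\<forall>A'. feasible F c h \<mu> m A' \<longrightarrow> total_output F c h m A' \<le> total_output F c h m A) \<and>
              r = F m \<and>
              w = max (wt_s F h) (max (wt_b F c h m) (wt_t F c h m))) \<and>
         equilibrium F c h \<mu> m (star_alloc F c h \<mu> m)
              (max (wt_s F h) (max (wt_b F c h m) (wt_t F c h m))) (F m)"
proof -
  interpret abundant_economy F c \<mu> h m
    by (rule abundant_economy_if_abundance_condition[OF cdf c h abundance m])
  have star: "equilibrium F c h \<mu> m (star_alloc F c h \<mu> m) (market_wage F c h m) (F m)"
    by (rule star_alloc_equilibrium[OF m])
  then show ?thesis
    using equilibrium_output_maximal equilibrium_rental equilibrium_wage
    unfolding market_wage_def by blast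
qed

end
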